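(* Let $(X,S,\beta)$ be a virtual pair, $H$ a group, and let $(f,g)$ and $(\tilde f,g)$ be two cohomologous noncommutative 2-cocycle pairs $X\times X\to H$. Then for every oriented virtual link diagram $L=K_1\cup\dots\cup K_r$, every coloring $\mathcal C$ of $L$ by $(X,S,\beta)$ and every $i$, $[\Psi_i(L,\mathcal C,f,g)]=[\Psi_i(L,\mathcal C,\tilde f,g)]$ (equality of conjugacy classes in $H$).
   Context: For a bijection $\sigma\colon X\times X\to X\times X$ write $\sigma(x,y)=(\sigma^1(x,y),\sigma^2(x,y))$. A biquandle is a bijection $\sigma$ satisfying $(\mathrm{id}\times\sigma)(\sigma\times\mathrm{id})(\mathrm{id}\times\sigma)=(\sigma\times\mathrm{id})(\mathrm{id}\times\sigma)(\sigma\times\mathrm{id})$, such that for all $x,z$ there is a unique $y$ with $\sigma^1(x,y)=z$, for all $y,t$ there is a unique $x$ with $\sigma^2(x,y)=t$, and there is a bijection $s_\sigma$ with $\{(x,y):\sigma(x,y)=(x,y)\}=\{(x,s_\sigma(x))\}$. A virtual pair $(X,S,\beta)$: biquandles $(X,S),(X,\beta)$ with $\beta^2=\mathrm{id}$ and $(\mathrm{id}\times\beta)(S\times\mathrm{id})(\mathrm{id}\times\beta)=(\beta\times\mathrm{id})(\mathrm{id}\times S)(\beta\times\mathrm{id})$; write $s=s_S$, $s_\beta$. A noncommutative 2-cocycle pair is $f,g\colon X\times X\to H$ with, for all $x,y,z$: (f1) $f(x,y)f(S^2(x,y),z)=f(x,S^1(y,z))f(S^2(x,S^1(y,z)),S^2(y,z))$;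 (f2) $f(S^1(x,y),S^1(S^2(x,y),z))=f(y,z)$; (f3) $f(x,s(x))=1$; (g1) $g(x,s_\beta(x))=1$; (g2) $g(x,y)g(\beta(x,y))=1$; (g3) $g(x,y)g(\beta^2(x,y),z)=g(x,\beta^1(y,z))g(\beta^2(x,\beta^1(y,z)),\beta^2(y,z))$; (g4) $g(y,z)g(\beta^2(x,\beta^1(y,z)),\beta^2(y,z))=g(x,y)g(\beta^1(x,y),\beta^1(\beta^2(x,y),z))$; (g5) $g(y,z)g(x,\beta^1(y,z))=g(\beta^2(x,y),z)g(\beta^1(x,y),\beta^1(\beta^2(x,y),z))$; (m1) $g(y,z)=g(S^1(x,y),\beta^1(S^2(x,y),z))$; (m2) $g(y,z)g(x,\beta^1(y,z))=g(S^2(x,y),z)g(S^1(x,y),\beta^1(S^2(x,y),z))$; (m3) $g(x,\beta^1(y,z))f(\beta^2(x,\beta^1(y,z)),\beta^2(y,z))=f(x,y)g(S^2(x,y),z)$. $(f,g)$ and $(\tilde f,g)$ are cohomologous if there is $\lambda\colon X\to H$ with $\tilde f(x,y)=\lambda(x)f(x,y)\lambda(S^2(x,y))^{-1}$ for all $x,y$, where for all $x,y$: $\lambda(x)=\lambda(s_S(x))$, $\lambda(y)=\lambda(S^1(x,y))$, $\lambda(y)=\lambda(\beta^1(x,y))$, and $\lambda(x)$ commutes with $g(x,y)$. Colorings and $\Psi_i$: drawing each crossing with both strands oriented downward, a coloring assigns elements of $X$ to semi-arcs such that at a positive classical crossing (under-strand top-left to bottom-right, over-strand top-right to bottom-left)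 with incoming colors $x$ (top-left), $y$ (top-right) the outgoing colors are $S^1(x,y)$ (bottom-left), $S^2(x,y)$ (bottom-right); at a negative classical crossing (over-strand top-left to bottom-right, under-strand top-right to bottom-left) with outgoing colors $x$ (bottom-left), $y$ (bottom-right) the incoming colors are $S^1(x,y)$ (top-left), $S^2(x,y)$ (top-right); at a virtual crossing with incoming $x$ (top-left), $y$ (top-right) the outgoing colors are $\beta^1(x,y)$ (bottom-left), $\beta^2(x,y)$ (bottom-right). Weights: $f(x,y)$ at a positive crossing, $f(x,y)^{-1}$ at a negative crossing, $g(x,y)$ at a virtual crossing (notation as just described). Choosing a base point on $K_i$, $\Psi_i(L,\mathcal C,f,g)$ is the product, in the order met while traversing $K_i$ along its orientation, of the weights of the classical crossings where $K_i$ passes along the under-strand and of the virtual crossings through which $K_i$ passes. $[h]$ is the conjugacy class of $h$. *)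

theory Defs
  imports "HOL-Algebra.Group"
begin

definition S1 :: "('x \<times> 'x \<Rightarrow> 'x \<times> 'x) \<Rightarrow> 'x \<Rightarrow> 'x \<Rightarrow> 'x" where
  "S1 \<sigma> x y = fst (\<sigma> (x, y))"

definition S2 :: "('x \<times> 'x \<Rightarrow> 'x \<times> 'x) \<Rightarrow> 'x \<Rightarrow> 'x \<Rightarrow> 'x" where
  "S2 \<sigma> x y = snd (\<sigma> (x, y))"

definition sig_id :: "('x \<times> 'x \<Rightarrow> 'x \<times> 'x) \<Rightarrow> 'x \<times> 'x \<times> 'x \<Rightarrow> 'x \<times> 'x \<times> 'x" where
  "sig_id \<sigma> t = (case t of (x, y, z) \<Rightarrow> (fst (\<sigma> (x, y)), snd (\<sigma> (x, y)), z))"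

definition id_sig :: "('x \<times> 'x \<Rightarrow> 'x \<times> 'x) \<Rightarrow> 'x \<times> 'x \<times> 'x \<Rightarrow> 'x \<times> 'x \<times> 'x" where
  "id_sig \<sigma> t = (case t of (x, y, z) \<Rightarrow> (x, fst (\<sigma> (y, z)), snd (\<sigma> (y, z))))"

definition biquandle :: "('x \<times> 'x \<Rightarrow> 'x \<times> 'x) \<Rightarrow> bool" where
  "biquandle \<sigma> \<longleftrightarrow>
     bij \<sigma> \<and>
     id_sig \<sigma> \<circ> sig_id \<sigma> \<circ> id_sig \<sigma> = sig_id \<sigma> \<circ> id_sig \<sigma> \<circ> sig_id \<sigma> \<and>
     (\<forall>x z. \<exists>!y. S1 \<sigma> x y = z) \<and>
     (\<forall>y t. \<exists>!x. S2 \<sigma> x y = t) \<and>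
     (\<exists>s. bij s \<and> {(x, y). \<sigma> (x, y) = (x, y)} = {(x, s x) | x. True})"

text \<open>The map s_sigma (well defined for a biquandle)\<close>
definition s_of :: "('x \<times> 'x \<Rightarrow> 'x \<times> 'x) \<Rightarrow> 'x \<Rightarrow> 'x" where
  "s_of \<sigma> x = (THE y. \<sigma> (x, y) = (x, y))"

definition virtual_pair :: "('x \<times> 'x \<Rightarrow> 'x \<times> 'x) \<Rightarrow> ('x \<times> 'x \<Rightarrow> 'x \<times> 'x) \<Rightarrow> bool" where
  "virtual_pair S \<beta> \<longleftrightarrow>
     biquandle S \<and> biquandle \<beta> \<and> \<beta> \<circ> \<beta> = id \<and>
     id_sig \<beta> \<circ> sig_id S \<circ> id_sig \<beta> = sig_id \<beta> \<circ> id_sig S \<circ> sig_id \<beta>"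

definition nc_cocycle_pair ::
  "('a, 'b) monoid_scheme \<Rightarrow> ('x \<times> 'x \<Rightarrow> 'x \<times> 'x) \<Rightarrow> ('x \<times> 'x \<Rightarrow> 'x \<times> 'x)
     \<Rightarrow> ('x \<Rightarrow> 'x \<Rightarrow> 'a) \<Rightarrow> ('x \<Rightarrow> 'x \<Rightarrow> 'a) \<Rightarrow> bool" where
  "nc_cocycle_pair H S \<beta> f g \<longleftrightarrow>
     (\<forall>x y. f x y \<in> carrier H) \<and> (\<forall>x y. g x y \<in> carrier H) \<and>
     (\<forall>x y z. f x y \<otimes>\<^bsub>H\<^esub> f (S2 S x y) z
        = f x (S1 S y z) \<otimes>\<^bsub>H\<^esub> f (S2 S x (S1 S y z)) (S2 S y z)) \<and>
     (\<forall>x y z. f (S1 S x y) (S1 S (S2 S x y) z) = f y z) \<and>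
     (\<forall>x. f x (s_of S x) = \<one>\<^bsub>H\<^esub>) \<and>
     (\<forall>x. g x (s_of \<beta> x) = \<one>\<^bsub>H\<^esub>) \<and>
     (\<forall>x y. g x y \<otimes>\<^bsub>H\<^esub> g (S1 \<beta> x y) (S2 \<beta> x y) = \<one>\<^bsub>H\<^esub>) \<and>
     (\<forall>x y z. g x y \<otimes>\<^bsub>H\<^esub> g (S2 \<beta> x y) z
        = g x (S1 \<beta> y z) \<otimes>\<^bsub>H\<^esub> g (S2 \<beta> x (S1 \<beta> y z)) (S2 \<beta> y z)) \<and>
     (\<forall>x y z. g y z \<otimes>\<^bsub>H\<^esub> g (S2 \<beta> x (S1 \<beta> y z)) (S2 \<beta> y z)
        = g x y \<otimes>\<^bsub>H\<^esub> g (S1 \<beta> x y) (S1 \<beta> (S2 \<beta> x y) z)) \<and>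
     (\<forall>x y z. g y z \<otimes>\<^bsub>H\<^esub> g x (S1 \<beta> y z)
        = g (S2 \<beta> x y) z \<otimes>\<^bsub>H\<^esub> g (S1 \<beta> x y) (S1 \<beta> (S2 \<beta> x y) z)) \<and>
     (\<forall>x y z. g y z = g (S1 S x y) (S1 \<beta> (S2 S x y) z)) \<and>
     (\<forall>x y z. g y z \<otimes>\<^bsub>H\<^esub> g x (S1 \<beta> y z)
        = g (S2 S x y) z \<otimes>\<^bsub>H\<^esub> g (S1 S x y) (S1 \<beta> (S2 S x y) z)) \<and>
     (\<forall>x y z. g x (S1 \<beta> y z) \<otimes>\<^bsub>H\<^esub> f (S2 \<beta> x (S1 \<beta> y z)) (S2 \<beta> y z)
        = f x y \<otimes>\<^bsub>H\<^esub> g (S2 S x y) z)"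

definition cohomologous ::
  "('a, 'b) monoid_scheme \<Rightarrow> ('x \<times> 'x \<Rightarrow> 'x \<times> 'x) \<Rightarrow> ('x \<times> 'x \<Rightarrow> 'x \<times> 'x)
     \<Rightarrow> ('x \<Rightarrow> 'x \<Rightarrow> 'a) \<Rightarrow> ('x \<Rightarrow> 'x \<Rightarrow> 'a) \<Rightarrow> ('x \<Rightarrow> 'x \<Rightarrow> 'a) \<Rightarrow> bool" where
  "cohomologous H S \<beta> f ft g \<longleftrightarrow>
     (\<exists>lam. (\<forall>x. lam x \<in> carrier H) \<and>
        (\<forall>x y. ft x y = lam x \<otimes>\<^bsub>H\<^esub> f x y \<otimes>\<^bsub>H\<^esub> inv\<^bsub>H\<^esub> (lam (S2 S x y))) \<and>
        (\<forall>x. lam x = lam (s_of S x)) \<and>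
        (\<forall>x y. lam y = lam (S1 S x y)) \<and>
        (\<forall>x y. lam y = lam (S1 \<beta> x y)) \<and>
        (\<forall>x y. lam x \<otimes>\<^bsub>H\<^esub> g x y = g x y \<otimes>\<^bsub>H\<^esub> lam x))"

definition conjugate :: "('a, 'b) monoid_scheme \<Rightarrow> 'a \<Rightarrow> 'a \<Rightarrow> bool" where
  "conjugate H a b \<longleftrightarrow> (\<exists>h \<in> carrier H. a = h \<otimes>\<^bsub>H\<^esub> b \<otimes>\<^bsub>H\<^esub> inv\<^bsub>H\<^esub> h)"

text \<open>
  Every crossing is drawn
  with both strands oriented downward; its two strands are the strand entering at
  top-left and leaving at bottom-right (strand True) and the strand entering at
  top-right and leaving at bottom-left (strand False).  A diagram is the list of its
  components; each component is the cyclic list of its passages (crossing, strand),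
  in the order met along the orientation starting from a base point.  Semi-arc j of
  component i is the one leaving passage j and entering passage (j+1) mod length.
  Under-strand: at a positive crossing it is strand True (top-left to bottom-right),
  at a negative crossing it is strand False (top-right to bottom-left).
\<close>

datatype ctype = Pos | Neg | Virt

type_synonym diagram = "(nat \<times> bool) list list"

definition diagram_ok :: "diagram \<Rightarrow> bool" where
  "diagram_ok D \<longleftrightarrow> distinct (concat D) \<and>
     (\<forall>c s. (c, s) \<in> set (concat D) \<longrightarrow> (c, \<not> s) \<in> set (concat D))"

definition crossings :: "diagram \<Rightarrow> nat set" where
  "crossings D = fst ` set (concat D)"

definition pos_of :: "diagram \<Rightarrow> nat \<times> bool \<Rightarrow> nat \<times> nat" where
  "pos_of D p = (THE ij. fst ij < length D \<and> snd ij < length (D ! fst ij) \<and>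
                          D ! fst ij ! snd ij = p)"

definition out_col :: "diagram \<Rightarrow> (nat \<Rightarrow> nat \<Rightarrow> 'x) \<Rightarrow> nat \<times> bool \<Rightarrow> 'x" where
  "out_col D col p = (case pos_of D p of (i, j) \<Rightarrow> col i j)"

definition in_col :: "diagram \<Rightarrow> (nat \<Rightarrow> nat \<Rightarrow> 'x) \<Rightarrow> nat \<times> bool \<Rightarrow> 'x" where
  "in_col D col p = (case pos_of D p of (i, j) \<Rightarrow>
      col i ((j + length (D ! i) - 1) mod length (D ! i)))"

definition col_tl :: "diagram \<Rightarrow> (nat \<Rightarrow> nat \<Rightarrow> 'x) \<Rightarrow> nat \<Rightarrow> 'x" where
  "col_tl D col c = in_col D col (c, True)"
definition col_tr :: "diagram \<Rightarrow> (nat \<Rightarrow> nat \<Rightarrow> 'x) \<Rightarrow> nat \<Rightarrow> 'x" where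
  "col_tr D col c = in_col D col (c, False)"
definition col_bl :: "diagram \<Rightarrow> (nat \<Rightarrow> nat \<Rightarrow> 'x) \<Rightarrow> nat \<Rightarrow> 'x" where
  "col_bl D col c = out_col D col (c, False)"
definition col_br :: "diagram \<Rightarrow> (nat \<Rightarrow> nat \<Rightarrow> 'x) \<Rightarrow> nat \<Rightarrow> 'x" where
  "col_br D col c = out_col D col (c, True)"

definition is_coloring ::
  "('x \<times> 'x \<Rightarrow> 'x \<times> 'x) \<Rightarrow> ('x \<times> 'x \<Rightarrow> 'x \<times> 'x) \<Rightarrow> (nat \<Rightarrow> ctype) \<Rightarrow> diagram
     \<Rightarrow> (nat \<Rightarrow> nat \<Rightarrow> 'x) \<Rightarrow> bool" where
  "is_coloring S \<beta> ctyp D col \<longleftrightarrow>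
     (\<forall>c \<in> crossings D.
        (ctyp c = Pos \<longrightarrow> (col_bl D col c, col_br D col c) = S (col_tl D col c, col_tr D col c)) \<and>
        (ctyp c = Neg \<longrightarrow> (col_tl D col c, col_tr D col c) = S (col_bl D col c, col_br D col c)) \<and>
        (ctyp c = Virt \<longrightarrow> (col_bl D col c, col_br D col c) = \<beta> (col_tl D col c, col_tr D col c)))"

definition passage_weight ::
  "('a, 'b) monoid_scheme \<Rightarrow> ('x \<Rightarrow> 'x \<Rightarrow> 'a) \<Rightarrow> ('x \<Rightarrow> 'x \<Rightarrow> 'a) \<Rightarrow> (nat \<Rightarrow> ctype)
     \<Rightarrow> diagram \<Rightarrow> (nat \<Rightarrow> nat \<Rightarrow> 'x) \<Rightarrow> nat \<times> bool \<Rightarrow> 'a" where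
  "passage_weight H f g ctyp D col p = (case p of (c, s) \<Rightarrow>
     (case ctyp c of
        Pos \<Rightarrow> (if s then f (col_tl D col c) (col_tr D col c) else \<one>\<^bsub>H\<^esub>)
      | Neg \<Rightarrow> (if s then \<one>\<^bsub>H\<^esub> else inv\<^bsub>H\<^esub> (f (col_bl D col c) (col_br D col c)))
      | Virt \<Rightarrow> g (col_tl D col c) (col_tr D col c)))"

definition Psi ::
  "('a, 'b) monoid_scheme \<Rightarrow> (nat \<Rightarrow> ctype) \<Rightarrow> diagram \<Rightarrow> (nat \<Rightarrow> nat \<Rightarrow> 'x)
     \<Rightarrow> ('x \<Rightarrow> 'x \<Rightarrow> 'a) \<Rightarrow> ('x \<Rightarrow> 'x \<Rightarrow> 'a) \<Rightarrow> nat \<Rightarrow> 'a" where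
  "Psi H ctyp D col f g i =
     foldr (\<lambda>p acc. passage_weight H f g ctyp D col p \<otimes>\<^bsub>H\<^esub> acc) (D ! i) \<one>\<^bsub>H\<^esub>"

end

theory Submission
  imports Defs
begin

(* Write lambda for the cochain relating f and ft. Along a component, the weight of each passage
   for ft is lambda(incoming colour) * (weight for f) * lambda(outgoing colour)^-1: at an
   over-passage or a virtual crossing the conditions on lambda make it take the same value on both
   semi-arcs and commute with g, so the weight does not change. Consecutive passages share a
   semi-arc, hence the product telescopes to lambda(c) Psi_i lambda(c)^-1, c the colour at the
   base point. *)

lemma distinct_concat_nth_nth_eq:
  assumes "distinct (concat D)" "i < length D" "j < length (D ! i)"
    "i' < length D" "j' < length (D ! i')" "D ! i ! j = D ! i' ! j'"
  shows "i = i' \<and> j = j'"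
  using assms
proof (induction D arbitrary: i i')
  case Nil
  then show ?case by simp
next
  case (Cons a D)
  have disjoint: "set a \<inter> set (concat D) = {}" and "distinct a"
    using Cons.prems(1) by simp_all
  have in_tail: "D ! k ! l \<in> set (concat D)" if "k < length D" "l < length (D ! k)" for k l
    using that by (force intro: nth_mem)
  have head_tail: "a ! l \<noteq> D ! k ! l'"
    if "l < length a" "k < length D" "l' < length (D ! k)" for l k l'
    using disjoint in_tail[OF that(2,3)] nth_mem[OF that(1)] by (metis disjoint_iff)
  show ?case
  proof (cases i; cases i')
    fix k k' assume "i = Suc k" "i' = Suc k'"
    then show ?thesis using Cons.prems Cons.IH[of k k'] by auto
  qed (use Cons.prems \<open>distinct a\<close> in
         \<open>auto simp: nth_eq_iff_index_eq head_tail head_tail[THEN not_sym]\<close>)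
qed

lemma pos_of_nth:
  assumes "distinct (concat D)" "i < length D" "j < length (D ! i)"
  shows "pos_of D (D ! i ! j) = (i, j)"
  unfolding pos_of_def
proof (rule the_equality)
  fix ij :: "nat \<times> nat"
  assume "fst ij < length D \<and> snd ij < length (D ! fst ij) \<and> D ! fst ij ! snd ij = D ! i ! j"
  then show "ij = (i, j)"
    using distinct_concat_nth_nth_eq[OF assms(1)] assms(2,3) by (metis prod.collapse)
qed (use assms in simp)

lemma out_col_nth:
  assumes "distinct (concat D)" "i < length D" "j < length (D ! i)"
  shows "out_col D col (D ! i ! j) = col i j"
  using assms by (simp add: out_col_def pos_of_nth)

lemma in_col_nth:
  assumes "distinct (concat D)" "i < length D" "j < length (D ! i)"
  shows "in_col D col (D ! i ! j) = col i ((j + length (D ! i) - 1) mod length (D ! i))"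
  using assms by (simp add: in_col_def pos_of_nth)

lemma (in group) foldr_mult_closed:
  assumes "\<And>x. x \<in> set xs \<Longrightarrow> w x \<in> carrier G"
  shows "foldr (\<lambda>x acc. w x \<otimes> acc) xs \<one> \<in> carrier G"
  using assms by (induction xs) auto

lemma (in group) foldr_mult_telescope:
  assumes "xs \<noteq> []"
    and "\<And>x. x \<in> set xs \<Longrightarrow> w x \<in> carrier G \<and> L x \<in> carrier G \<and> R x \<in> carrier G"
    and "\<And>x. x \<in> set xs \<Longrightarrow> w' x = L x \<otimes> w x \<otimes> inv R x"
    and "\<And>k. Suc k < length xs \<Longrightarrow> R (xs ! k) = L (xs ! Suc k)"
  shows "foldr (\<lambda>x acc. w' x \<otimes> acc) xs \<one>
           = L (hd xs) \<otimes> foldr (\<lambda>x acc. w x \<otimes> acc) xs \<one> \<otimes> inv R (last xs)"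
  using assms
proof (induction xs)
  case Nil
  then show ?case by simp
next
  case (Cons x ys)
  have x: "w x \<in> carrier G" "L x \<in> carrier G" "R x \<in> carrier G"
    using Cons.prems(2) by simp_all
  show ?case
  proof (cases "ys = []")
    case True
    with x Cons.prems(3) show ?thesis by (simp add: m_assoc)
  next
    case False
    let ?F = "foldr (\<lambda>x acc. w x \<otimes> acc) ys \<one>"
    have F: "?F \<in> carrier G" and last: "R (last ys) \<in> carrier G"
      using Cons.prems(2) False by (auto intro: foldr_mult_closed)
    have link: "R x = L (hd ys)"
      using Cons.prems(4)[of 0] False by (simp add: hd_conv_nth)
    have IH: "foldr (\<lambda>x acc. w' x \<otimes> acc) ys \<one> = R x \<otimes> ?F \<otimes> inv R (last ys)"
      using Cons.IH[OF False] Cons.prems(2-4) link by force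
    have "foldr (\<lambda>x acc. w' x \<otimes> acc) (x # ys) \<one>
            = (L x \<otimes> w x \<otimes> inv R x) \<otimes> (R x \<otimes> ?F \<otimes> inv R (last ys))"
      using Cons.prems(3) IH by simp
    also have "\<dots> = L x \<otimes> (w x \<otimes> ?F) \<otimes> inv R (last ys)"
      using x F last by (simp add: m_assoc inv_solve_left')
    finally show ?thesis
      using False by simp
  qed
qed

lemma (in group) conjugate_conj:
  assumes "a \<in> carrier G" "h \<in> carrier G"
  shows "conjugate G a (h \<otimes> a \<otimes> inv h)"
  unfolding conjugate_def
proof
  show "a = inv h \<otimes> (h \<otimes> a \<otimes> inv h) \<otimes> inv (inv h)"
    using assms by (simp add: m_assoc[symmetric]) (simp add: m_assoc)
qed (use assms in simp)

lemma (in group) conj_commuting: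
  assumes "a \<in> carrier G" "b \<in> carrier G" "a \<otimes> b = b \<otimes> a"
  shows "a \<otimes> b \<otimes> inv a = b"
  using assms by (simp add: m_assoc)

locale cohomologous_weights = group H for H :: "('a, 'b) monoid_scheme" (structure) +
  fixes S \<beta> :: "'x \<times> 'x \<Rightarrow> 'x \<times> 'x" and f ft g :: "'x \<Rightarrow> 'x \<Rightarrow> 'a" and lam :: "'x \<Rightarrow> 'a"
  assumes f_closed: "f x y \<in> carrier H"
    and g_closed: "g x y \<in> carrier H"
    and g_mult_g_beta: "g x y \<otimes> g (S1 \<beta> x y) (S2 \<beta> x y) = \<one>"
    and beta_involutive: "\<beta> (\<beta> p) = p"
    and lam_closed: "lam x \<in> carrier H"
    and ft_eq: "ft x y = lam x \<otimes> f x y \<otimes> inv lam (S2 S x y)"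
    and lam_S1: "lam (S1 S x y) = lam y"
    and lam_beta1: "lam (S1 \<beta> x y) = lam y"
    and lam_g_commute: "lam x \<otimes> g x y = g x y \<otimes> lam x"
begin

lemma inv_ft_eq: "inv ft x y = lam (S2 S x y) \<otimes> inv f x y \<otimes> inv lam x"
  using lam_closed f_closed by (simp add: ft_eq inv_mult_group m_assoc)

lemma lam_beta2: "lam (S2 \<beta> x y) = lam x"
  using lam_beta1[of "S1 \<beta> x y" "S2 \<beta> x y"] beta_involutive[of "(x, y)"]
  by (simp add: S1_def S2_def)

lemma lam_g_commute_right: "lam y \<otimes> g x y = g x y \<otimes> lam y"
proof -
  \<comment> \<open>g x y is the inverse of the weight at \<beta>(x, y), whose first argument carries lam y\<close>
  have "g x y = inv g (S1 \<beta> x y) (S2 \<beta> x y)"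
    using g_mult_g_beta g_closed by (metis inv_equality)
  then show ?thesis
    using lam_g_commute[of "S1 \<beta> x y" "S2 \<beta> x y"] lam_closed g_closed
    by (metis lam_beta1 inv_solve_left inv_solve_right m_assoc m_closed)
qed

lemma passage_weight_ft:
  assumes coloring: "is_coloring S \<beta> ctyp D col" and c: "c \<in> crossings D"
  shows "passage_weight H ft g ctyp D col (c, s)
           = lam (in_col D col (c, s)) \<otimes> passage_weight H f g ctyp D col (c, s)
             \<otimes> inv lam (out_col D col (c, s))"
proof -
  define tl tr bl br
    where "tl = col_tl D col c" and "tr = col_tr D col c"
      and "bl = col_bl D col c" and "br = col_br D col c"
  have colors: "in_col D col (c, True) = tl" "in_col D col (c, False) = tr"
      "out_col D col (c, True) = br" "out_col D col (c, False) = bl"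
    by (simp_all add: tl_def tr_def bl_def br_def col_tl_def col_tr_def col_bl_def col_br_def)
  have rel: "ctyp c = Pos \<Longrightarrow> bl = S1 S tl tr \<and> br = S2 S tl tr"
      "ctyp c = Neg \<Longrightarrow> tl = S1 S bl br \<and> tr = S2 S bl br"
      "ctyp c = Virt \<Longrightarrow> bl = S1 \<beta> tl tr \<and> br = S2 \<beta> tl tr"
    using coloring c unfolding is_coloring_def tl_def tr_def bl_def br_def S1_def S2_def
    by (metis fst_conv snd_conv)+
  have weight: "passage_weight H h g ctyp D col (c, s) = (case ctyp c of
        Pos \<Rightarrow> if s then h tl tr else \<one>
      | Neg \<Rightarrow> if s then \<one> else inv h bl br
      | Virt \<Rightarrow> g tl tr)" for h s
    unfolding passage_weight_def tl_def tr_def bl_def br_def by simp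
  show ?thesis
  proof (cases "ctyp c")
    case Pos
    then show ?thesis
      using rel(1) lam_closed by (cases s) (simp_all add: weight colors ft_eq lam_S1)
  next
    case Neg
    then show ?thesis
      using rel(2) lam_closed by (cases s) (simp_all add: weight colors inv_ft_eq lam_S1)
  next
    case Virt
    then show ?thesis
      using rel(3) conj_commuting[OF lam_closed g_closed lam_g_commute]
        conj_commuting[OF lam_closed g_closed lam_g_commute_right]
      by (cases s) (simp_all add: weight colors lam_beta1 lam_beta2)
  qed
qed

lemma Psi_ft_conjugate:
  assumes ok: "diagram_ok D" and coloring: "is_coloring S \<beta> ctyp D col" and i: "i < length D"
  shows "conjugate H (Psi H ctyp D col f g i) (Psi H ctyp D col ft g i)"
proof (cases "D ! i = []")
  case True
  then show ?thesis
    using conjugate_conj[OF one_closed one_closed] by (simp add: Psi_def)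
next
  case False
  define xs where "xs = D ! i"
  define n where "n = length xs"
  define L where "L p = lam (in_col D col p)" for p
  define R where "R p = lam (out_col D col p)" for p
  let ?w = "passage_weight H f g ctyp D col" and ?w' = "passage_weight H ft g ctyp D col"
  have dist: "distinct (concat D)"
    using ok by (simp add: diagram_ok_def)
  have n: "n > 0"
    using False by (simp add: n_def xs_def)
  have out_in: "R (xs ! k) = L (xs ! ((k + 1) mod n))" if "k < n" for k
    using that n dist i out_col_nth[of D i k col] in_col_nth[of D i "(k + 1) mod n" col]
    by (cases "k + 1 = n") (simp_all add: L_def R_def xs_def n_def, metis One_nat_def diff_Suc_1)
  have crossing: "fst p \<in> crossings D" if "p \<in> set xs" for p
    using that i by (force simp: crossings_def xs_def)
  have weights: "?w p \<in> carrier H" for p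
    by (auto simp: passage_weight_def f_closed g_closed split: prod.split ctype.split)
  have "Psi H ctyp D col ft g i = L (hd xs) \<otimes> Psi H ctyp D col f g i \<otimes> inv R (last xs)"
    unfolding Psi_def xs_def[symmetric]
  proof (rule foldr_mult_telescope)
    show "?w' p = L p \<otimes> ?w p \<otimes> inv R p" if "p \<in> set xs" for p
      using passage_weight_ft[OF coloring crossing[OF that], of "snd p"] by (simp add: L_def R_def)
    show "R (xs ! k) = L (xs ! Suc k)" if "Suc k < length xs" for k
      using out_in[of k] that by (simp add: n_def)
  qed (use False weights in \<open>simp_all add: xs_def L_def R_def lam_closed\<close>)
  moreover have "L (hd xs) = R (last xs)"
    using out_in[of "n - 1"] n False by (simp add: hd_conv_nth last_conv_nth n_def)
  moreover have "Psi H ctyp D col f g i \<in> carrier H"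
    unfolding Psi_def using weights by (rule foldr_mult_closed)
  ultimately show ?thesis
    using conjugate_conj lam_closed by (simp add: R_def)
qed

end

theorem mainTheorem7:
  fixes H :: "('a, 'b) monoid_scheme"
    and S \<beta> :: "'x \<times> 'x \<Rightarrow> 'x \<times> 'x"
    and f ft g :: "'x \<Rightarrow> 'x \<Rightarrow> 'a"
    and ctyp :: "nat \<Rightarrow> ctype" and D :: diagram and col :: "nat \<Rightarrow> nat \<Rightarrow> 'x" and i :: nat
  assumes "virtual_pair S \<beta>"
    and "group H"
    and "nc_cocycle_pair H S \<beta> f g"
    and "nc_cocycle_pair H S \<beta> ft g"
    and "cohomologous H S \<beta> f ft g"
    and "diagram_ok D"
    and "is_coloring S \<beta> ctyp D col"
    and "i < length D"
  shows "conjugate H (Psi H ctyp D col f g i) (Psi H ctyp D col ft g i)"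
proof -
  obtain lam where "\<forall>x. lam x \<in> carrier H"
    and "\<forall>x y. ft x y = lam x \<otimes>\<^bsub>H\<^esub> f x y \<otimes>\<^bsub>H\<^esub> inv\<^bsub>H\<^esub> (lam (S2 S x y))"
    and "\<forall>x y. lam y = lam (S1 S x y)" and "\<forall>x y. lam y = lam (S1 \<beta> x y)"
    and "\<forall>x y. lam x \<otimes>\<^bsub>H\<^esub> g x y = g x y \<otimes>\<^bsub>H\<^esub> lam x"
    using \<open>cohomologous H S \<beta> f ft g\<close> unfolding cohomologous_def by blast
  moreover have "\<beta> \<circ> \<beta> = id"
    using \<open>virtual_pair S \<beta>\<close> by (simp add: virtual_pair_def)
  ultimately interpret cohomologous_weights H S \<beta> f ft g lam
    using \<open>group H\<close> \<open>nc_cocycle_pair H S \<beta> f g\<close>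
    by (intro cohomologous_weights.intro cohomologous_weights_axioms.intro)
      (simp_all add: nc_cocycle_pair_def pointfree_idE)
  show ?thesis
    using Psi_ft_conjugate assms(6-8) .
qed

end
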